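(* Consider the Cucker–Smale model with bonding force $$\dot{\mathbf{x}}_i=\mathbf{v}_i,\qquad \dot{\mathbf{v}}_i=\frac{\kappa_0}{N}\sum_{j=1}^N\psi(\|\mathbf{x}_j-\mathbf{x}_i\|)(\mathbf{v}_j-\mathbf{v}_i)+\frac{\kappa_1}{N}\sum_{j\ne i}\Big\langle\mathbf{v}_j-\mathbf{v}_i,\frac{\mathbf{x}_j-\mathbf{x}_i}{\|\mathbf{x}_j-\mathbf{x}_i\|}\Big\rangle\frac{\mathbf{x}_j-\mathbf{x}_i}{\|\mathbf{x}_j-\mathbf{x}_i\|}+\frac{\kappa_2}{N}\sum_{j\ne i}\big(\|\mathbf{x}_j-\mathbf{x}_i\|-d^\infty_{ij}\big)\frac{\mathbf{x}_j-\mathbf{x}_i}{\|\mathbf{x}_j-\mathbf{x}_i\|}.$$ Suppose the initial data and parameters satisfy $$\min_{i\ne j}\|\mathbf{x}_i^0-\mathbf{x}_j^0\|>0,\quad \min_{i\ne j}d^\infty_{ij}>\sqrt{\frac{2NE(0)}{\kappa_2}},\quad (X^0,V^0)\in S,\quad \kappa_0>0,\ \kappa_1>0,\ \kappa_2>0,$$ and for $\tau\in(0,\infty]$ let $\{(\mathbf{x}_i,\mathbf{v}_i)\}$ be a smooth solution on $[0,\tau)$. Then for all $i\ne j$ and all $t\in[0,\tau)$, $$0<L\le\|\mathbf{x}_i(t)-\mathbf{x}_j(t)\|\le U.$$ In particular no finite-time collisions occur.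
   Context: $N\ge2$, $d\ge1$, Euclidean norm and inner product on $\mathbb{R}^d$; $[d^\infty_{ij}]$ real $N\times N$ matrix with $d^\infty_{ii}=0$, $d^\infty_{ij}=d^\infty_{ji}$; $(X^0,V^0)=(\mathbf{x}_i(0),\mathbf{v}_i(0))_i$. Energy: $E:=\frac12\sum_i\|\mathbf{v}_i\|^2+\frac{\kappa_2}{4N}\sum_{i,j}(\|\mathbf{x}_j-\mathbf{x}_i\|-d^\infty_{ij})^2$. $U:=\max_{i\ne j}d^\infty_{ij}+\sqrt{2NE(0)/\kappa_2}$, $L:=\min_{i\ne j}d^\infty_{ij}-\sqrt{2NE(0)/\kappa_2}$, $S:=\{(X,V)\in\mathbb{R}^{2dN}:\max_{i\ne j}\|\mathbf{x}_i-\mathbf{x}_j\|\le U\}$. The weight $\psi:[0,\infty)\to[0,\infty)$ is locally Lipschitz with $0\le\psi(r)\le\psi_M$ for all $r\ge0$ and $\psi_m:=\min_{r\in[0,U]}\psi(r)>0$. A smooth solution is a $C^1$ solution with $\mathbf{x}_i(t)\ne\mathbf{x}_j(t)$ for $i\ne j$. *)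

theory Defs
  imports "HOL-Analysis.Analysis"
begin

definition energy :: "nat \<Rightarrow> real \<Rightarrow> (nat \<Rightarrow> nat \<Rightarrow> real) \<Rightarrow> (nat \<Rightarrow> 'a::euclidean_space) \<Rightarrow> (nat \<Rightarrow> 'a) \<Rightarrow> real" where
  "energy N \<kappa>2 dinf X V =
     1/2 * (\<Sum>i<N. (norm (V i))^2)
     + \<kappa>2 / (4 * real N) * (\<Sum>i<N. \<Sum>j<N. (norm (X j - X i) - dinf i j)^2)"

definition max_offdiag :: "nat \<Rightarrow> (nat \<Rightarrow> nat \<Rightarrow> real) \<Rightarrow> real" where
  "max_offdiag N a = Max {a i j | i j. i < N \<and> j < N \<and> i \<noteq> j}"

definition min_offdiag :: "nat \<Rightarrow> (nat \<Rightarrow> nat \<Rightarrow> real) \<Rightarrow> real" where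
  "min_offdiag N a = Min {a i j | i j. i < N \<and> j < N \<and> i \<noteq> j}"

definition Ubound :: "nat \<Rightarrow> real \<Rightarrow> (nat \<Rightarrow> nat \<Rightarrow> real) \<Rightarrow> real \<Rightarrow> real" where
  "Ubound N \<kappa>2 dinf E0 = max_offdiag N dinf + sqrt (2 * real N * E0 / \<kappa>2)"

definition Lbound :: "nat \<Rightarrow> real \<Rightarrow> (nat \<Rightarrow> nat \<Rightarrow> real) \<Rightarrow> real \<Rightarrow> real" where
  "Lbound N \<kappa>2 dinf E0 = min_offdiag N dinf - sqrt (2 * real N * E0 / \<kappa>2)"

definition in_S :: "nat \<Rightarrow> real \<Rightarrow> (nat \<Rightarrow> 'a::euclidean_space) \<Rightarrow> (nat \<Rightarrow> 'a) \<Rightarrow> bool" where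
  "in_S N U X V \<longleftrightarrow> max_offdiag N (\<lambda>i j. norm (X i - X j)) \<le> U"

definition cs_force :: "nat \<Rightarrow> real \<Rightarrow> real \<Rightarrow> real \<Rightarrow> (real \<Rightarrow> real) \<Rightarrow> (nat \<Rightarrow> nat \<Rightarrow> real)
    \<Rightarrow> (nat \<Rightarrow> 'a::euclidean_space) \<Rightarrow> (nat \<Rightarrow> 'a) \<Rightarrow> nat \<Rightarrow> 'a" where
  "cs_force N \<kappa>0 \<kappa>1 \<kappa>2 \<psi> dinf X V i =
     (\<kappa>0 / real N) *\<^sub>R (\<Sum>j<N. \<psi> (norm (X j - X i)) *\<^sub>R (V j - V i))
   + (\<kappa>1 / real N) *\<^sub>R (\<Sum>j\<in>{..<N} - {i}.
        ((V j - V i) \<bullet> ((1 / norm (X j - X i)) *\<^sub>R (X j - X i))) *\<^sub>R ((1 / norm (X j - X i)) *\<^sub>R (X j - X i)))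
   + (\<kappa>2 / real N) *\<^sub>R (\<Sum>j\<in>{..<N} - {i}.
        (norm (X j - X i) - dinf i j) *\<^sub>R ((1 / norm (X j - X i)) *\<^sub>R (X j - X i)))"

definition loc_lipschitz_nonneg :: "(real \<Rightarrow> real) \<Rightarrow> bool" where
  "loc_lipschitz_nonneg \<psi> \<longleftrightarrow> (\<forall>b\<ge>0. \<exists>K. K-lipschitz_on {0..b} \<psi>)"

definition smooth_solution :: "nat \<Rightarrow> real \<Rightarrow> real \<Rightarrow> real \<Rightarrow> (real \<Rightarrow> real) \<Rightarrow> (nat \<Rightarrow> nat \<Rightarrow> real)
    \<Rightarrow> ereal \<Rightarrow> (nat \<Rightarrow> real \<Rightarrow> 'a::euclidean_space) \<Rightarrow> (nat \<Rightarrow> real \<Rightarrow> 'a) \<Rightarrow> bool" where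
  "smooth_solution N \<kappa>0 \<kappa>1 \<kappa>2 \<psi> dinf \<tau> x v \<longleftrightarrow>
     (let T = {t. 0 \<le> t \<and> ereal t < \<tau>} in
      (\<forall>i<N. \<forall>t\<in>T. (x i has_vector_derivative v i t) (at t within T)) \<and>
      (\<forall>i<N. \<forall>t\<in>T. (v i has_vector_derivative
           cs_force N \<kappa>0 \<kappa>1 \<kappa>2 \<psi> dinf (\<lambda>j. x j t) (\<lambda>j. v j t) i) (at t within T)) \<and>
      (\<forall>i<N. continuous_on T (x i) \<and> continuous_on T (v i)) \<and>
      (\<forall>i<N. continuous_on T (\<lambda>t. cs_force N \<kappa>0 \<kappa>1 \<kappa>2 \<psi> dinf (\<lambda>j. x j t) (\<lambda>j. v j t) i)) \<and>
      (\<forall>i<N. \<forall>j<N. i \<noteq> j \<longrightarrow> (\<forall>t\<in>T. x i t \<noteq> x j t)))"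

end

theory Submission
  imports Defs
begin

(* The energy E is nonincreasing along smooth solutions. Since every pairwise interaction F_ij
   is antisymmetric, sum_i <v_i, F_i> = -(1/2N) sum_ij <v_j - v_i, F_ij>; the alignment terms
   contribute -psi |v_j - v_i|^2 and -<v_j - v_i, e_ij>^2, and the bonding term cancels exactly
   the time derivative of the potential part of E. A single pair of the potential therefore
   gives kappa2/(2N) (|x_i - x_j| - d_ij)^2 <= E(t) <= E(0), i.e. the deviation of |x_i - x_j|
   from d_ij is at most sqrt (2N E(0)/kappa2), which is the claim. *)

lemma has_vector_derivative_norm:
  fixes f :: "real \<Rightarrow> 'a::real_inner"
  assumes "(f has_vector_derivative f') (at s within S)" and "f s \<noteq> 0"
  shows "((\<lambda>t. norm (f t)) has_real_derivative f' \<bullet> sgn (f s)) (at s within S)"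
proof -
  have "((\<lambda>t. norm (f t)) has_derivative (\<lambda>h. (h *\<^sub>R f') \<bullet> sgn (f s))) (at s within S)"
    using has_derivative_compose[OF assms(1)[unfolded has_vector_derivative_def]
        has_derivative_norm[OF assms(2)]] by (simp add: o_def)
  then show ?thesis
    unfolding has_field_derivative_def by (rule has_derivative_eq_rhs) (simp add: fun_eq_iff)
qed

lemma DERIV_within_nonpos_imp_nonincreasing:
  fixes f :: "real \<Rightarrow> real"
  assumes "a \<le> b"
    and "\<And>t. t \<in> {a..b} \<Longrightarrow> (f has_real_derivative f' t) (at t within {a..b})"
    and "\<And>t. t \<in> {a..b} \<Longrightarrow> f' t \<le> 0"
  shows "f b \<le> f a"
proof -
  have "\<exists>t\<in>{a..b}. f b - f a = f' t * (b - a)"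
    using assms(2) by (intro mvt_very_simple[OF assms(1)]) (simp add: has_field_derivative_def)
  then obtain t where t: "t \<in> {a..b}" and mvt: "f b - f a = f' t * (b - a)" ..
  have "f' t * (b - a) \<le> 0"
    using assms(1) assms(3)[OF t] by (intro mult_nonpos_nonneg) auto
  with mvt show ?thesis
    by linarith
qed

lemma sum_inner_sum_antisym:
  fixes g :: "'i \<Rightarrow> 'i \<Rightarrow> 'a::real_inner"
  assumes "\<And>i j. i \<in> A \<Longrightarrow> j \<in> A \<Longrightarrow> g j i = - g i j"
  shows "(\<Sum>i\<in>A. v i \<bullet> (\<Sum>j\<in>A. g i j)) = - (\<Sum>i\<in>A. \<Sum>j\<in>A. (v j - v i) \<bullet> g i j) / 2"
proof -
  have "(\<Sum>i\<in>A. \<Sum>j\<in>A. v j \<bullet> g i j) = (\<Sum>j\<in>A. \<Sum>i\<in>A. v j \<bullet> g i j)"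
    by (rule sum.swap)
  also have "\<dots> = (\<Sum>j\<in>A. \<Sum>i\<in>A. - (v j \<bullet> g j i))"
  proof (intro sum.cong refl)
    fix i j assume "i \<in> A" "j \<in> A"
    then show "v j \<bullet> g i j = - (v j \<bullet> g j i)"
      using assms[of j i] by simp
  qed
  finally have swap: "(\<Sum>i\<in>A. \<Sum>j\<in>A. v j \<bullet> g i j) = - (\<Sum>i\<in>A. \<Sum>j\<in>A. v i \<bullet> g i j)"
    by (simp only: sum_negf)
  have "(\<Sum>i\<in>A. \<Sum>j\<in>A. (v j - v i) \<bullet> g i j) = - 2 * (\<Sum>i\<in>A. \<Sum>j\<in>A. v i \<bullet> g i j)"
    unfolding inner_diff_left sum_subtractf swap by simp
  then show ?thesis
    by (simp add: inner_sum_right)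
qed

(* The unit vector (x_j - x_i)/|x_j - x_i| of cs_force is sgn (x_j - x_i), which vanishes for j = i. *)
definition cs_pair_force :: "real \<Rightarrow> real \<Rightarrow> real \<Rightarrow> (real \<Rightarrow> real) \<Rightarrow> (nat \<Rightarrow> nat \<Rightarrow> real)
    \<Rightarrow> (nat \<Rightarrow> 'a::real_inner) \<Rightarrow> (nat \<Rightarrow> 'a) \<Rightarrow> nat \<Rightarrow> nat \<Rightarrow> 'a" where
  "cs_pair_force \<kappa>0 \<kappa>1 \<kappa>2 \<psi> dinf X V i j =
     (\<kappa>0 * \<psi> (norm (X j - X i))) *\<^sub>R (V j - V i)
   + (\<kappa>1 * ((V j - V i) \<bullet> sgn (X j - X i))) *\<^sub>R sgn (X j - X i)
   + (\<kappa>2 * (norm (X j - X i) - dinf i j)) *\<^sub>R sgn (X j - X i)"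

lemma cs_pair_force_antisym:
  assumes "dinf j i = dinf i j"
  shows "cs_pair_force \<kappa>0 \<kappa>1 \<kappa>2 \<psi> dinf X V j i = - cs_pair_force \<kappa>0 \<kappa>1 \<kappa>2 \<psi> dinf X V i j"
proof -
  have "X i - X j = - (X j - X i)" "V i - V j = - (V j - V i)"
    by simp_all
  then show ?thesis
    unfolding cs_pair_force_def using assms
    by (simp only: norm_minus_cancel sgn_minus inner_minus_left inner_minus_right minus_minus
        scaleR_minus_right scaleR_minus_left minus_add_distrib mult_minus_right)
qed

lemma inner_cs_pair_force:
  "(V j - V i) \<bullet> cs_pair_force \<kappa>0 \<kappa>1 \<kappa>2 \<psi> dinf X V i j =
     \<kappa>0 * \<psi> (norm (X j - X i)) * (norm (V j - V i))\<^sup>2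
   + \<kappa>1 * ((V j - V i) \<bullet> sgn (X j - X i))\<^sup>2
   + \<kappa>2 * (norm (X j - X i) - dinf i j) * ((V j - V i) \<bullet> sgn (X j - X i))"
  unfolding cs_pair_force_def inner_add_right inner_scaleR_right power2_norm_eq_inner
  by (simp add: power2_eq_square)

lemma cs_force_eq_sum_cs_pair_force:
  assumes "i < N"
  shows "cs_force N \<kappa>0 \<kappa>1 \<kappa>2 \<psi> dinf X V i =
    (1 / real N) *\<^sub>R (\<Sum>j<N. cs_pair_force \<kappa>0 \<kappa>1 \<kappa>2 \<psi> dinf X V i j)"
proof -
  have unit: "(1 / norm y) *\<^sub>R y = sgn y" for y :: 'a
    by (simp add: sgn_div_norm divide_inverse_commute)
  have drop_diagonal: "(\<Sum>j\<in>{..<N} - {i}. c j *\<^sub>R sgn (X j - X i)) = (\<Sum>j<N. c j *\<^sub>R sgn (X j - X i))"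
    for c :: "nat \<Rightarrow> real"
    using assms by (simp add: sum_diff1)
  show ?thesis
    unfolding cs_force_def cs_pair_force_def unit drop_diagonal
    by (simp add: sum.distrib scaleR_sum_right scaleR_add_right)
qed

lemma cs_force_power:
  fixes X V :: "nat \<Rightarrow> 'a::euclidean_space"
  assumes "\<And>i j. i < N \<Longrightarrow> j < N \<Longrightarrow> dinf j i = dinf i j"
  shows "(\<Sum>i<N. V i \<bullet> cs_force N \<kappa>0 \<kappa>1 \<kappa>2 \<psi> dinf X V i) =
    - (\<Sum>i<N. \<Sum>j<N. (V j - V i) \<bullet> cs_pair_force \<kappa>0 \<kappa>1 \<kappa>2 \<psi> dinf X V i j) / (2 * real N)"
proof -
  have "(\<Sum>i<N. V i \<bullet> cs_force N \<kappa>0 \<kappa>1 \<kappa>2 \<psi> dinf X V i) =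
      (\<Sum>i<N. V i \<bullet> (\<Sum>j<N. cs_pair_force \<kappa>0 \<kappa>1 \<kappa>2 \<psi> dinf X V i j)) / real N"
    by (simp add: cs_force_eq_sum_cs_pair_force sum_divide_distrib)
  also have "\<dots> = - (\<Sum>i<N. \<Sum>j<N. (V j - V i) \<bullet> cs_pair_force \<kappa>0 \<kappa>1 \<kappa>2 \<psi> dinf X V i j) / (2 * real N)"
    using assms by (subst sum_inner_sum_antisym) (auto intro: cs_pair_force_antisym)
  finally show ?thesis .
qed

lemma cs_force_dissipation:
  fixes X V :: "nat \<Rightarrow> 'a::euclidean_space"
  assumes "\<And>i j. i < N \<Longrightarrow> j < N \<Longrightarrow> dinf j i = dinf i j"
    and "\<And>r. r \<ge> 0 \<Longrightarrow> \<psi> r \<ge> 0" and "\<kappa>0 \<ge> 0" and "\<kappa>1 \<ge> 0"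
  shows "(\<Sum>i<N. V i \<bullet> cs_force N \<kappa>0 \<kappa>1 \<kappa>2 \<psi> dinf X V i)
    + \<kappa>2 / (2 * real N) * (\<Sum>i<N. \<Sum>j<N.
        (norm (X j - X i) - dinf i j) * ((V j - V i) \<bullet> sgn (X j - X i))) \<le> 0"
proof -
  define P where "P i j = (norm (X j - X i) - dinf i j) * ((V j - V i) \<bullet> sgn (X j - X i))" for i j
  define D where "D i j = \<kappa>0 * \<psi> (norm (X j - X i)) * (norm (V j - V i))\<^sup>2
    + \<kappa>1 * ((V j - V i) \<bullet> sgn (X j - X i))\<^sup>2" for i j
  have dissipated: "0 \<le> (\<Sum>i<N. \<Sum>j<N. D i j)"
    using assms(2-4) unfolding D_def by (intro sum_nonneg add_nonneg_nonneg mult_nonneg_nonneg) auto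
  have pair_sum: "(\<Sum>i<N. \<Sum>j<N. (V j - V i) \<bullet> cs_pair_force \<kappa>0 \<kappa>1 \<kappa>2 \<psi> dinf X V i j)
      = (\<Sum>i<N. \<Sum>j<N. D i j) + \<kappa>2 * (\<Sum>i<N. \<Sum>j<N. P i j)"
    unfolding inner_cs_pair_force D_def P_def by (simp add: sum.distrib sum_distrib_left mult.assoc)
  have power: "(\<Sum>i<N. V i \<bullet> cs_force N \<kappa>0 \<kappa>1 \<kappa>2 \<psi> dinf X V i)
      = - (\<Sum>i<N. \<Sum>j<N. (V j - V i) \<bullet> cs_pair_force \<kappa>0 \<kappa>1 \<kappa>2 \<psi> dinf X V i j) / (2 * real N)"
    using assms(1) by (rule cs_force_power)
  have nonpos: "S = - Q / d \<Longrightarrow> Q = A + c * B \<Longrightarrow> 0 \<le> A \<Longrightarrow> 0 \<le> d \<Longrightarrow> S + c / d * B \<le> 0"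
    for S Q A B c d :: real
    by (simp add: diff_divide_distrib divide_nonneg_nonneg)
  show ?thesis
    unfolding P_def[symmetric] by (rule nonpos[OF power pair_sum dissipated]) simp
qed

lemma has_vector_derivative_norm_power2:
  fixes f :: "real \<Rightarrow> 'a::real_inner"
  assumes "(f has_vector_derivative f') (at s within S)"
  shows "((\<lambda>t. (norm (f t))\<^sup>2) has_real_derivative 2 * (f s \<bullet> f')) (at s within S)"
proof -
  note df = assms[unfolded has_vector_derivative_def]
  have "((\<lambda>t. f t \<bullet> f t) has_derivative (\<lambda>h. f s \<bullet> (h *\<^sub>R f') + (h *\<^sub>R f') \<bullet> f s)) (at s within S)"
    using has_derivative_inner[OF df df] .
  then show ?thesis
    unfolding power2_norm_eq_inner has_field_derivative_def
    by (rule has_derivative_eq_rhs) (simp add: fun_eq_iff inner_commute)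
qed

lemma energy_has_real_derivative:
  fixes x v :: "nat \<Rightarrow> real \<Rightarrow> 'a::euclidean_space"
  assumes "\<And>i. i < N \<Longrightarrow> (x i has_vector_derivative x' i) (at s within S)"
    and "\<And>i. i < N \<Longrightarrow> (v i has_vector_derivative v' i) (at s within S)"
    and "\<And>i j. i < N \<Longrightarrow> j < N \<Longrightarrow> i \<noteq> j \<Longrightarrow> x i s \<noteq> x j s"
  shows "((\<lambda>t. energy N \<kappa>2 dinf (\<lambda>i. x i t) (\<lambda>i. v i t)) has_real_derivative
      (\<Sum>i<N. v i s \<bullet> v' i) + \<kappa>2 / (2 * real N) * (\<Sum>i<N. \<Sum>j<N.
        (norm (x j s - x i s) - dinf i j) * ((x' j - x' i) \<bullet> sgn (x j s - x i s)))) (at s within S)"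
proof -
  have potential: "((\<lambda>t. (norm (x j t - x i t) - dinf i j)\<^sup>2) has_real_derivative
      2 * ((norm (x j s - x i s) - dinf i j) * ((x' j - x' i) \<bullet> sgn (x j s - x i s)))) (at s within S)"
    if "i < N" "j < N" for i j
  proof (cases "i = j")
    case False
    have "((\<lambda>t. norm (x j t - x i t)) has_real_derivative (x' j - x' i) \<bullet> sgn (x j s - x i s)) (at s within S)"
      using assms(1,3) that False by (intro has_vector_derivative_norm derivative_intros) auto
    then show ?thesis
      by (auto intro!: derivative_eq_intros)
  qed simp
  have "((\<lambda>t. energy N \<kappa>2 dinf (\<lambda>i. x i t) (\<lambda>i. v i t)) has_real_derivative
      1/2 * (\<Sum>i<N. 2 * (v i s \<bullet> v' i)) + \<kappa>2 / (4 * real N) * (\<Sum>i<N. \<Sum>j<N.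
        2 * ((norm (x j s - x i s) - dinf i j) * ((x' j - x' i) \<bullet> sgn (x j s - x i s))))) (at s within S)"
    unfolding energy_def
    using assms(2) by (intro DERIV_add DERIV_cmult DERIV_sum potential has_vector_derivative_norm_power2) auto
  then show ?thesis
    by (simp add: sum_distrib_left[symmetric])
qed

lemma smooth_solution_energy_le_initial:
  fixes x v :: "nat \<Rightarrow> real \<Rightarrow> 'a::euclidean_space"
  assumes sol: "smooth_solution N \<kappa>0 \<kappa>1 \<kappa>2 \<psi> dinf \<tau> x v"
    and sym: "\<And>i j. i < N \<Longrightarrow> j < N \<Longrightarrow> dinf j i = dinf i j"
    and "\<And>r. r \<ge> 0 \<Longrightarrow> \<psi> r \<ge> 0" and "\<kappa>0 \<ge> 0" and "\<kappa>1 \<ge> 0"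
    and t: "0 \<le> t" "ereal t < \<tau>"
  shows "energy N \<kappa>2 dinf (\<lambda>i. x i t) (\<lambda>i. v i t) \<le> energy N \<kappa>2 dinf (\<lambda>i. x i 0) (\<lambda>i. v i 0)"
proof -
  define T where "T = {t. 0 \<le> t \<and> ereal t < \<tau>}"
  define F where "F s i = cs_force N \<kappa>0 \<kappa>1 \<kappa>2 \<psi> dinf (\<lambda>j. x j s) (\<lambda>j. v j s) i" for s i
  have sub: "{0..t} \<subseteq> T"
    using t unfolding T_def by (auto intro: le_less_trans[of _ "ereal t"])
  have dxT: "\<forall>i<N. \<forall>s\<in>T. (x i has_vector_derivative v i s) (at s within T)"
    and dvT: "\<forall>i<N. \<forall>s\<in>T. (v i has_vector_derivative F s i) (at s within T)"
    and distinctT: "\<forall>i<N. \<forall>j<N. i \<noteq> j \<longrightarrow> (\<forall>s\<in>T. x i s \<noteq> x j s)"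
    using sol unfolding smooth_solution_def Let_def T_def[symmetric] F_def by blast+
  have dx: "(x i has_vector_derivative v i s) (at s within {0..t})"
    and dv: "(v i has_vector_derivative F s i) (at s within {0..t})"
    if "i < N" "s \<in> {0..t}" for i s
  proof -
    have "s \<in> T"
      using that(2) sub by blast
    then show "(x i has_vector_derivative v i s) (at s within {0..t})"
      and "(v i has_vector_derivative F s i) (at s within {0..t})"
      using dxT dvT that(1) sub by (blast intro: has_vector_derivative_within_subset)+
  qed
  have distinct: "x i s \<noteq> x j s" if "i < N" "j < N" "i \<noteq> j" "s \<in> {0..t}" for i j s
    using that sub distinctT by blast
  show ?thesis
  proof (rule DERIV_within_nonpos_imp_nonincreasing[OF t(1)])
    fix s assume s: "s \<in> {0..t}"
    show "((\<lambda>t. energy N \<kappa>2 dinf (\<lambda>i. x i t) (\<lambda>i. v i t)) has_real_derivative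
      (\<Sum>i<N. v i s \<bullet> F s i) + \<kappa>2 / (2 * real N) * (\<Sum>i<N. \<Sum>j<N.
        (norm (x j s - x i s) - dinf i j) * ((v j s - v i s) \<bullet> sgn (x j s - x i s)))) (at s within {0..t})"
      using dx dv distinct s by (intro energy_has_real_derivative)
    show "(\<Sum>i<N. v i s \<bullet> F s i) + \<kappa>2 / (2 * real N) * (\<Sum>i<N. \<Sum>j<N.
        (norm (x j s - x i s) - dinf i j) * ((v j s - v i s) \<bullet> sgn (x j s - x i s))) \<le> 0"
      unfolding F_def using sym assms(3-5) by (rule cs_force_dissipation)
  qed
qed

lemma pair_deviation_sq_le_energy:
  fixes X V :: "nat \<Rightarrow> 'a::euclidean_space"
  assumes "i < N" "j < N" "i \<noteq> j" and "dinf j i = dinf i j" and "\<kappa>2 > 0"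
  shows "(norm (X i - X j) - dinf i j)\<^sup>2 \<le> 2 * real N * energy N \<kappa>2 dinf X V / \<kappa>2"
proof -
  define Q where "Q k l = (norm (X l - X k) - dinf k l)\<^sup>2" for k l
  have "Q i j + Q j i \<le> (\<Sum>l<N. Q i l) + (\<Sum>l<N. Q j l)"
    using assms(1,2) by (intro add_mono member_le_sum) (auto simp: Q_def)
  also have "\<dots> = (\<Sum>k\<in>{i, j}. \<Sum>l<N. Q k l)"
    using assms(3) by simp
  also have "\<dots> \<le> (\<Sum>k<N. \<Sum>l<N. Q k l)"
    using assms(1,2) by (intro sum_mono2) (auto simp: Q_def intro: sum_nonneg)
  finally have "2 * Q j i \<le> (\<Sum>k<N. \<Sum>l<N. Q k l)"
    using assms(4) by (simp add: Q_def norm_minus_commute)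
  then have "\<kappa>2 / (4 * real N) * (2 * Q j i) \<le> \<kappa>2 / (4 * real N) * (\<Sum>k<N. \<Sum>l<N. Q k l)"
    using assms(5) by (intro mult_left_mono) auto
  also have "\<dots> \<le> energy N \<kappa>2 dinf X V"
    unfolding energy_def Q_def by (simp add: sum_nonneg)
  finally show ?thesis
    using assms(1,4,5) by (simp add: Q_def field_simps)
qed

lemma finite_offdiag:
  fixes N :: nat
  shows "finite {a i j | i j. i < N \<and> j < N \<and> i \<noteq> j}"
proof (rule finite_subset)
  show "{a i j | i j. i < N \<and> j < N \<and> i \<noteq> j} \<subseteq> (\<lambda>(i, j). a i j) ` ({..<N} \<times> {..<N})"
    by auto
qed simp

lemma min_offdiag_le: "i < N \<Longrightarrow> j < N \<Longrightarrow> i \<noteq> j \<Longrightarrow> min_offdiag N a \<le> a i j"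
  unfolding min_offdiag_def by (rule Min_le[OF finite_offdiag]) blast

lemma max_offdiag_ge: "i < N \<Longrightarrow> j < N \<Longrightarrow> i \<noteq> j \<Longrightarrow> a i j \<le> max_offdiag N a"
  unfolding max_offdiag_def by (rule Max_ge[OF finite_offdiag]) blast

theorem theorem4p1:
  fixes N :: nat and \<kappa>0 \<kappa>1 \<kappa>2 \<psi>M :: real and \<psi> :: "real \<Rightarrow> real"
    and dinf :: "nat \<Rightarrow> nat \<Rightarrow> real" and \<tau> :: ereal
    and x v :: "nat \<Rightarrow> real \<Rightarrow> 'a::euclidean_space"
  defines "E0 \<equiv> energy N \<kappa>2 dinf (\<lambda>i. x i 0) (\<lambda>i. v i 0)"
  defines "U \<equiv> Ubound N \<kappa>2 dinf E0"
  defines "L \<equiv> Lbound N \<kappa>2 dinf E0"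
  assumes N2: "N \<ge> 2"
    and dinf_diag: "\<forall>i<N. dinf i i = 0"
    and dinf_sym: "\<forall>i<N. \<forall>j<N. dinf i j = dinf j i"
    and psi_lip: "loc_lipschitz_nonneg \<psi>"
    and psi_bdd: "\<forall>r\<ge>0. 0 \<le> \<psi> r \<and> \<psi> r \<le> \<psi>M"
    and psi_min: "(INF r\<in>{0..U}. \<psi> r) > 0"
    and init_sep: "min_offdiag N (\<lambda>i j. norm (x i 0 - x j 0)) > 0"
    and dinf_big: "min_offdiag N dinf > sqrt (2 * real N * E0 / \<kappa>2)"
    and init_S: "in_S N U (\<lambda>i. x i 0) (\<lambda>i. v i 0)"
    and k0: "\<kappa>0 > 0" and k1: "\<kappa>1 > 0" and k2: "\<kappa>2 > 0"
    and tau: "\<tau> > 0"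
    and sol: "smooth_solution N \<kappa>0 \<kappa>1 \<kappa>2 \<psi> dinf \<tau> x v"
  shows "\<forall>i<N. \<forall>j<N. i \<noteq> j \<longrightarrow> (\<forall>t. 0 \<le> t \<and> ereal t < \<tau> \<longrightarrow>
           0 < L \<and> L \<le> norm (x i t - x j t) \<and> norm (x i t - x j t) \<le> U)"
proof (intro allI impI)
  fix i j t
  assume ij: "i < N" "j < N" "i \<noteq> j" and t: "0 \<le> t \<and> ereal t < \<tau>"
  have sym: "\<And>i j. i < N \<Longrightarrow> j < N \<Longrightarrow> dinf j i = dinf i j"
    using dinf_sym by simp
  have "energy N \<kappa>2 dinf (\<lambda>i. x i t) (\<lambda>i. v i t) \<le> E0"
    unfolding E0_def
    by (rule smooth_solution_energy_le_initial[OF sol]) (use sym psi_bdd k0 k1 t in auto)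
  then have "2 * real N * energy N \<kappa>2 dinf (\<lambda>i. x i t) (\<lambda>i. v i t) / \<kappa>2 \<le> 2 * real N * E0 / \<kappa>2"
    using k2 by (intro divide_right_mono mult_left_mono) auto
  with pair_deviation_sq_le_energy[OF ij sym[OF ij(1,2)] k2, where X="\<lambda>i. x i t" and V="\<lambda>i. v i t"]
  have "(norm (x i t - x j t) - dinf i j)\<^sup>2 \<le> 2 * real N * E0 / \<kappa>2"
    by simp
  then have "\<bar>norm (x i t - x j t) - dinf i j\<bar> \<le> sqrt (2 * real N * E0 / \<kappa>2)"
    by (metis real_sqrt_abs real_sqrt_le_mono)
  moreover have "min_offdiag N dinf \<le> dinf i j" "dinf i j \<le> max_offdiag N dinf"
    using ij by (auto intro: min_offdiag_le max_offdiag_ge)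
  ultimately show "0 < L \<and> L \<le> norm (x i t - x j t) \<and> norm (x i t - x j t) \<le> U"
    unfolding L_def U_def Lbound_def Ubound_def using dinf_big by (simp add: abs_le_iff)
qed

end
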